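(* Let $n\ge 2k\ge 2$ and let $S\subseteq\{0,1,\ldots,k-1\}$ with $|S|=s>1$, and let $X=\bigcup_{i\in S}J(n,k,i)$. If $X$ admits perfect state transfer at time $\tau$, then $n=2k$ and there is a permutation matrix $T$ of order two with no fixed points and a complex number $\lambda$ with $|\lambda|=1$ such that $\mathcal{H}_X(\tau)=\lambda T$.
   Context: $J(n,k,i)$ is the graph on the $k$-subsets of $\{1,\ldots,n\}$ with $A\sim B$ iff $|A\cap B|=i$; the union $\bigcup_{i\in S}J(n,k,i)$ has $A\sim B$ iff $|A\cap B|\in S$. For a simple graph $X$ with adjacency matrix $A$, $\mathcal{H}_X(t)=e^{itA}$. $X$ admits perfect state transfer at time $\tau>0$ if $|\mathcal{H}_X(\tau)_{u,v}|=1$ for some vertices $u\neq v$. *)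

theory Defs
  imports Complex_Main
begin

definition ksubsets :: "nat \<Rightarrow> nat \<Rightarrow> nat set set" where
  "ksubsets n k = {A. A \<subseteq> {1..n} \<and> card A = k}"

text \<open>Adjacency matrix of the union of J(n,k,i) over i in S (entries 0/1, indexed by vertices).\<close>
definition union_adj :: "nat \<Rightarrow> nat \<Rightarrow> nat set \<Rightarrow> nat set \<Rightarrow> nat set \<Rightarrow> complex" where
  "union_adj n k S A B =
     (if A \<in> ksubsets n k \<and> B \<in> ksubsets n k \<and> card (A \<inter> B) \<in> S then 1 else 0)"

definition mat_id :: "'a \<Rightarrow> 'a \<Rightarrow> complex" where
  "mat_id u v = (if u = v then 1 else 0)"

definition mat_mult :: "'a set \<Rightarrow> ('a \<Rightarrow> 'a \<Rightarrow> complex) \<Rightarrow> ('a \<Rightarrow> 'a \<Rightarrow> complex) \<Rightarrow> 'a \<Rightarrow> 'a \<Rightarrow> complex" where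
  "mat_mult V M N u v = (\<Sum>w\<in>V. M u w * N w v)"

fun mat_pow :: "'a set \<Rightarrow> ('a \<Rightarrow> 'a \<Rightarrow> complex) \<Rightarrow> nat \<Rightarrow> 'a \<Rightarrow> 'a \<Rightarrow> complex" where
  "mat_pow V M 0 = mat_id"
| "mat_pow V M (Suc m) = mat_mult V M (mat_pow V M m)"

text \<open>Transition matrix H_X(t) = exp(i t A), written as the exponential power series (entrywise).\<close>
definition transition :: "'a set \<Rightarrow> ('a \<Rightarrow> 'a \<Rightarrow> complex) \<Rightarrow> real \<Rightarrow> 'a \<Rightarrow> 'a \<Rightarrow> complex" where
  "transition V A t u v = (\<Sum>m. ((\<i> * complex_of_real t) ^ m / of_nat (fact m)) * mat_pow V A m u v)"

definition has_pst :: "'a set \<Rightarrow> ('a \<Rightarrow> 'a \<Rightarrow> complex) \<Rightarrow> real \<Rightarrow> bool" where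
  "has_pst V A \<tau> \<longleftrightarrow> \<tau> > 0 \<and>
     (\<exists>u\<in>V. \<exists>v\<in>V. u \<noteq> v \<and> cmod (transition V A \<tau> u v) = 1)"

definition perm_matrix :: "'a set \<Rightarrow> ('a \<Rightarrow> 'a \<Rightarrow> complex) \<Rightarrow> bool" where
  "perm_matrix V T \<longleftrightarrow> (\<exists>\<sigma>. bij_betw \<sigma> V V \<and> (\<forall>u\<in>V. \<forall>v\<in>V. T u v = (if \<sigma> u = v then 1 else 0)))"

end

theory Submission
  imports Defs "HOL-Combinatorics.Transposition"
begin

text \<open>Every permutation of \<open>{1..n}\<close> induces an automorphism of \<open>X\<close> and therefore commutes
  with \<open>H(\<tau>)\<close>. Since \<open>H(\<tau>)\<close> is unitary, \<open>|H(\<tau>)\<^sub>u\<^sub>v| = 1\<close> makes \<open>u\<close> the only nonzero entry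
  of column \<open>v\<close>, so every permutation fixing \<open>v\<close> also fixes \<open>u\<close>. Applied to transpositions
  of two points on the same side of \<open>v\<close>, this forces \<open>u\<close> to be the complement of \<open>v\<close>, whence
  \<open>n = 2k\<close>. The permutations act transitively on the pairs (complement of \<open>v\<close>, \<open>v\<close>), so all
  these entries equal one number \<open>c\<close>, and \<open>H(\<tau>) = c T\<close> for the complementation matrix \<open>T\<close>.\<close>

definition exp_coeff :: "real \<Rightarrow> nat \<Rightarrow> complex" where
  "exp_coeff t m = (\<i> * complex_of_real t) ^ m / of_nat (fact m)"

lemma transition_eq_suminf:
  "transition V A t u v = (\<Sum>m. exp_coeff t m * mat_pow V A m u v)"
  by (simp add: transition_def exp_coeff_def)

lemma norm_exp_coeff: "cmod (exp_coeff t m) = \<bar>t\<bar> ^ m / fact m"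
  by (simp add: exp_coeff_def norm_mult norm_power norm_divide)

lemma exp_coeff_add: "exp_coeff (s + t) m = (\<Sum>i\<le>m. exp_coeff s i * exp_coeff t (m - i))"
proof -
  have "(\<i> * complex_of_real s + \<i> * complex_of_real t) ^ m /\<^sub>R fact m =
     (\<Sum>i\<le>m. (\<i> * complex_of_real s) ^ i /\<^sub>R fact i * (\<i> * complex_of_real t) ^ (m - i) /\<^sub>R fact (m - i))"
    using exp_series_add_commuting[of "\<i> * complex_of_real s" "\<i> * complex_of_real t" m] by simp
  then show ?thesis
    by (simp add: exp_coeff_def scaleR_conv_of_real distrib_left divide_inverse mult_ac)
qed

lemma cnj_exp_coeff: "cnj (exp_coeff t m) = exp_coeff (-t) m"
proof -
  have "cnj (\<i> * complex_of_real t) = \<i> * complex_of_real (-t)" by simp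
  then show ?thesis
    unfolding exp_coeff_def by (simp only: complex_cnj_divide complex_cnj_power complex_cnj_of_nat)
qed

lemma mat_mult_id_left:
  assumes "finite V" "u \<in> V"
  shows "mat_mult V mat_id M u v = M u v"
proof -
  have "mat_mult V mat_id M u v = (\<Sum>w\<in>V. if u = w then M w v else 0)"
    unfolding mat_mult_def mat_id_def by (rule sum.cong) auto
  then show ?thesis using assms by simp
qed

lemma mat_mult_mat_pow:
  assumes "finite V" "u \<in> V"
  shows "mat_mult V (mat_pow V A i) (mat_pow V A j) u v = mat_pow V A (i + j) u v"
  using assms(2)
proof (induction i arbitrary: u)
  case 0
  then show ?case by (simp add: mat_mult_id_left[OF assms(1)])
next
  case (Suc i)
  have "mat_mult V (mat_pow V A (Suc i)) (mat_pow V A j) u v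
      = (\<Sum>w\<in>V. \<Sum>x\<in>V. A u x * mat_pow V A i x w * mat_pow V A j w v)"
    by (simp add: mat_mult_def sum_distrib_right)
  also have "\<dots> = (\<Sum>x\<in>V. A u x * mat_mult V (mat_pow V A i) (mat_pow V A j) x v)"
    by (subst sum.swap) (simp add: mat_mult_def sum_distrib_left mult.assoc)
  also have "\<dots> = (\<Sum>x\<in>V. A u x * mat_pow V A (i + j) x v)"
    by (rule sum.cong) (simp_all add: Suc.IH)
  also have "\<dots> = mat_pow V A (Suc i + j) u v"
    by (simp add: mat_mult_def)
  finally show ?case .
qed

lemma norm_mat_pow_le:
  assumes "V \<subseteq> U" "x \<in> U" "\<And>y w. y \<in> U \<Longrightarrow> w \<in> V \<Longrightarrow> cmod (A y w) \<le> B"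
  shows "cmod (mat_pow V A m x v) \<le> (real (card V) * B) ^ m"
  using assms(2)
proof (induction m arbitrary: x)
  case 0
  then show ?case by (simp add: mat_id_def)
next
  case (Suc m)
  have "cmod (mat_pow V A (Suc m) x v) \<le> (\<Sum>w\<in>V. cmod (A x w) * cmod (mat_pow V A m w v))"
    by (simp add: mat_mult_def norm_mult[symmetric] norm_sum)
  also have "\<dots> \<le> (\<Sum>w\<in>V. B * (real (card V) * B) ^ m)"
  proof (rule sum_mono)
    fix w assume w: "w \<in> V"
    have "0 \<le> B" using assms(3)[OF Suc.prems w] norm_ge_zero order_trans by blast
    then show "cmod (A x w) * cmod (mat_pow V A m w v) \<le> B * (real (card V) * B) ^ m"
      using assms(1,3) Suc w by (intro mult_mono) auto
  qed
  also have "\<dots> = (real (card V) * B) ^ Suc m" by simp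
  finally show ?case .
qed

lemma summable_norm_transition_terms:
  assumes "finite V"
  shows "summable (\<lambda>m. cmod (exp_coeff t m * mat_pow V A m u v))"
proof -
  define U where "U = insert u V" \<comment> \<open>the row index \<open>u\<close> need not lie in \<open>V\<close>\<close>
  define B where "B = (\<Sum>y\<in>U. \<Sum>w\<in>V. cmod (A y w))"
  define r where "r = \<bar>t\<bar> * (real (card V) * B)"
  have entry_le: "cmod (A y w) \<le> B" if "y \<in> U" "w \<in> V" for y w
  proof -
    have "cmod (A y w) \<le> (\<Sum>w'\<in>V. cmod (A y w'))"
      using that assms by (intro member_le_sum) auto
    also have "\<dots> \<le> B"
      unfolding B_def using that assms by (intro member_le_sum sum_nonneg) (auto simp: U_def)
    finally show ?thesis .
  qed
  show ?thesis
  proof (rule summable_comparison_test[OF _ summable_exp_generic[of r]])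
    have "cmod (exp_coeff t m * mat_pow V A m u v) \<le> r ^ m /\<^sub>R fact m" for m
    proof -
      have "cmod (exp_coeff t m * mat_pow V A m u v) \<le> \<bar>t\<bar> ^ m / fact m * (real (card V) * B) ^ m"
        unfolding norm_mult norm_exp_coeff
        by (rule mult_left_mono[OF norm_mat_pow_le[of V U]]) (auto simp: U_def entry_le)
      then show ?thesis by (simp add: r_def power_mult_distrib divide_simps)
    qed
    then show "\<exists>N. \<forall>m\<ge>N. norm (cmod (exp_coeff t m * mat_pow V A m u v)) \<le> r ^ m /\<^sub>R fact m"
      by (auto simp: real_norm_def)
  qed
qed

lemma transition_sums:
  assumes "finite V"
  shows "(\<lambda>m. exp_coeff t m * mat_pow V A m u v) sums transition V A t u v"
  unfolding transition_eq_suminf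
  by (rule summable_sums[OF summable_norm_cancel[OF summable_norm_transition_terms[OF assms]]])

lemma transition_add:
  assumes "finite V" "u \<in> V"
  shows "mat_mult V (transition V A s) (transition V A t) u v = transition V A (s + t) u v"
proof -
  define x where "x = (\<lambda>w m. exp_coeff s m * mat_pow V A m u w)"
  define y where "y = (\<lambda>w m. exp_coeff t m * mat_pow V A m w v)"
  define z where "z w m = (\<Sum>i\<le>m. x w i * y w (m - i))" for w m
  have z_sums: "z w sums (transition V A s u w * transition V A t w v)" for w
  proof -
    have "z w sums (suminf (x w) * suminf (y w))"
      unfolding z_def x_def y_def
      by (intro Cauchy_product_sums summable_norm_transition_terms assms(1))
    then show ?thesis by (simp add: x_def y_def transition_eq_suminf)
  qed
  have coeff: "(\<Sum>w\<in>V. z w m) = exp_coeff (s + t) m * mat_pow V A m u v" for m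
  proof -
    have "(\<Sum>w\<in>V. z w m) = (\<Sum>i\<le>m. exp_coeff s i * exp_coeff t (m - i)
                                  * mat_mult V (mat_pow V A i) (mat_pow V A (m - i)) u v)"
      unfolding z_def x_def y_def mat_mult_def
      by (subst sum.swap) (simp add: sum_distrib_left mult_ac)
    also have "\<dots> = (\<Sum>i\<le>m. exp_coeff s i * exp_coeff t (m - i) * mat_pow V A m u v)"
      by (rule sum.cong) (simp_all add: mat_mult_mat_pow[OF assms])
    finally show ?thesis by (simp add: exp_coeff_add sum_distrib_right)
  qed
  have "(\<lambda>m. \<Sum>w\<in>V. z w m) sums mat_mult V (transition V A s) (transition V A t) u v"
    unfolding mat_mult_def by (rule sums_sum) (rule z_sums)
  moreover have "(\<lambda>m. \<Sum>w\<in>V. z w m) sums transition V A (s + t) u v"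
    unfolding coeff by (rule transition_sums[OF assms(1)])
  ultimately show ?thesis by (rule sums_unique2)
qed

lemma transition_zero: "transition V A 0 u v = mat_id u v"
proof -
  have "(\<lambda>m. exp_coeff 0 m * mat_pow V A m u v) = (\<lambda>m. if m = 0 then mat_id u v else 0)"
    by (auto simp: exp_coeff_def)
  then show ?thesis
    using sums_single[of 0 "\<lambda>_. mat_id u v"] by (simp add: transition_eq_suminf sums_iff)
qed

lemma cnj_mat_pow:
  assumes "\<And>u v. u \<in> V \<Longrightarrow> v \<in> V \<Longrightarrow> cnj (A u v) = A u v" "u \<in> V"
  shows "cnj (mat_pow V A m u v) = mat_pow V A m u v"
  using assms(2)
proof (induction m arbitrary: u)
  case 0
  then show ?case by (simp add: mat_id_def)
next
  case (Suc m)
  then show ?case by (simp add: mat_mult_def assms(1))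
qed

lemma cnj_transition:
  assumes "finite V" "\<And>u v. u \<in> V \<Longrightarrow> v \<in> V \<Longrightarrow> cnj (A u v) = A u v" "u \<in> V"
  shows "cnj (transition V A t u v) = transition V A (-t) u v"
proof -
  have "(\<lambda>m. cnj (exp_coeff t m * mat_pow V A m u v)) sums cnj (transition V A t u v)"
    by (simp only: sums_cnj transition_sums[OF assms(1)])
  then show ?thesis
    by (simp add: cnj_exp_coeff cnj_mat_pow[OF assms(2,3)] transition_eq_suminf sums_iff)
qed

lemma mat_pow_Suc_right:
  assumes "finite V" "u \<in> V" "v \<in> V"
  shows "mat_pow V A (Suc m) u v = (\<Sum>w\<in>V. mat_pow V A m u w * A w v)"
proof -
  have "mat_pow V A (Suc 0) w v = A w v" for w
    using assms(1,3) by (simp add: mat_mult_def mat_id_def if_distrib[of "(*) _"] cong: if_cong)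
  then show ?thesis
    using mat_mult_mat_pow[OF assms(1,2), of A m "Suc 0" v] by (simp add: mat_mult_def)
qed

lemma mat_pow_symmetric:
  assumes "finite V" "\<And>u v. u \<in> V \<Longrightarrow> v \<in> V \<Longrightarrow> A v u = A u v" "u \<in> V" "v \<in> V"
  shows "mat_pow V A m v u = mat_pow V A m u v"
  using assms(3,4)
proof (induction m arbitrary: u v)
  case 0
  then show ?case by (simp add: mat_id_def)
next
  case (Suc m)
  have "mat_pow V A (Suc m) v u = (\<Sum>w\<in>V. mat_pow V A m v w * A w u)"
    by (rule mat_pow_Suc_right[OF assms(1) Suc.prems(2,1)])
  also have "\<dots> = (\<Sum>w\<in>V. A u w * mat_pow V A m w v)"
    by (rule sum.cong) (simp_all add: Suc.IH Suc.prems assms(2))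
  finally show ?case by (simp add: mat_mult_def)
qed

lemma transition_symmetric:
  assumes "finite V" "\<And>u v. u \<in> V \<Longrightarrow> v \<in> V \<Longrightarrow> A v u = A u v" "u \<in> V" "v \<in> V"
  shows "transition V A t v u = transition V A t u v"
  by (simp add: transition_def mat_pow_symmetric[OF assms])

lemma transition_column_norm:
  assumes "finite V" "\<And>u v. u \<in> V \<Longrightarrow> v \<in> V \<Longrightarrow> A v u = A u v"
    "\<And>u v. u \<in> V \<Longrightarrow> v \<in> V \<Longrightarrow> cnj (A u v) = A u v" "v \<in> V"
  shows "(\<Sum>w\<in>V. (cmod (transition V A t w v))\<^sup>2) = 1"
proof -
  have "(\<Sum>w\<in>V. complex_of_real ((cmod (transition V A t w v))\<^sup>2))
      = (\<Sum>w\<in>V. transition V A t v w * transition V A (-t) w v)"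
  proof (rule sum.cong)
    fix w assume w: "w \<in> V"
    have "transition V A t v w = transition V A t w v"
      by (rule transition_symmetric[OF assms(1,2) w assms(4)])
    moreover have "transition V A (-t) w v = cnj (transition V A t w v)"
      by (rule cnj_transition[OF assms(1,3) w, symmetric])
    ultimately show "complex_of_real ((cmod (transition V A t w v))\<^sup>2)
             = transition V A t v w * transition V A (-t) w v"
      by (simp add: complex_norm_square[symmetric])
  qed simp
  also have "\<dots> = transition V A (t + -t) v v"
    using transition_add[OF assms(1,4)] by (simp add: mat_mult_def)
  also have "\<dots> = 1"
    by (simp add: transition_zero mat_id_def)
  finally show ?thesis
    by (metis of_real_eq_1_iff of_real_sum)
qed

lemma transition_column_unique:
  assumes "finite V" "\<And>u v. u \<in> V \<Longrightarrow> v \<in> V \<Longrightarrow> A v u = A u v"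
    "\<And>u v. u \<in> V \<Longrightarrow> v \<in> V \<Longrightarrow> cnj (A u v) = A u v" "v \<in> V"
    "u \<in> V" "cmod (transition V A t u v) = 1" "w \<in> V" "w \<noteq> u"
  shows "transition V A t w v = 0"
proof -
  let ?f = "\<lambda>w. (cmod (transition V A t w v))\<^sup>2"
  have "?f u + (\<Sum>w\<in>V - {u}. ?f w) = 1"
    using transition_column_norm[OF assms(1-4)] sum.remove[OF assms(1,5), of ?f] by simp
  then have "(\<Sum>w\<in>V - {u}. ?f w) = 0"
    using assms(6) by simp
  then have "?f w = 0"
    using assms(1,7,8) by (subst (asm) sum_nonneg_eq_0_iff) auto
  then show ?thesis by simp
qed

lemma mat_pow_automorphism:
  assumes "bij_betw f V V" "\<And>u v. u \<in> V \<Longrightarrow> v \<in> V \<Longrightarrow> A (f u) (f v) = A u v"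
    "u \<in> V" "v \<in> V"
  shows "mat_pow V A m (f u) (f v) = mat_pow V A m u v"
  using assms(3)
proof (induction m arbitrary: u)
  case 0
  then show ?case
    using assms(1,4) by (auto simp: mat_id_def bij_betw_def inj_on_def)
next
  case (Suc m)
  have "mat_pow V A (Suc m) (f u) (f v) = (\<Sum>w\<in>V. A (f u) (f w) * mat_pow V A m (f w) (f v))"
    using sum.reindex_bij_betw[OF assms(1), of "\<lambda>w. A (f u) w * mat_pow V A m w (f v)"]
    by (simp add: mat_mult_def)
  also have "\<dots> = mat_pow V A (Suc m) u v"
    by (simp add: mat_mult_def Suc assms(2))
  finally show ?case .
qed

lemma transition_automorphism:
  assumes "bij_betw f V V" "\<And>u v. u \<in> V \<Longrightarrow> v \<in> V \<Longrightarrow> A (f u) (f v) = A u v"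
    "u \<in> V" "v \<in> V"
  shows "transition V A t (f u) (f v) = transition V A t u v"
  by (simp add: transition_def mat_pow_automorphism[where f = f and A = A, OF assms])

lemma finite_ksubsets: "finite (ksubsets n k)"
  by (rule finite_subset[of _ "Pow {1..n}"]) (auto simp: ksubsets_def)

lemma complement_mem_ksubsets:
  "u \<in> ksubsets n k \<Longrightarrow> {1..n} - u \<in> ksubsets n (n - k)"
  by (auto simp: ksubsets_def card_Diff_subset finite_subset)

lemma complement_ksubsets_half:
  assumes "n = 2 * k" "0 < k" "u \<in> ksubsets n k"
  shows "{1..n} - u \<in> ksubsets n k" "{1..n} - ({1..n} - u) = u" "{1..n} - u \<noteq> u"
proof -
  show "{1..n} - u \<in> ksubsets n k"
    using complement_mem_ksubsets[OF assms(3)] assms(1) by simp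
  show "{1..n} - ({1..n} - u) = u"
    using assms(3) by (auto simp: ksubsets_def)
  show "{1..n} - u \<noteq> u"
  proof
    assume "{1..n} - u = u"
    then have "u = {}" by blast
    with assms(2,3) show False by (simp add: ksubsets_def)
  qed
qed

lemma union_adj_symmetric: "union_adj n k S v u = union_adj n k S u v"
  by (auto simp: union_adj_def Int_commute)

lemma cnj_union_adj: "cnj (union_adj n k S u v) = union_adj n k S u v"
  by (simp add: union_adj_def)

lemma image_mem_ksubsets:
  assumes "bij_betw \<sigma> {1..n} {1..n}" "u \<in> ksubsets n k"
  shows "\<sigma> ` u \<in> ksubsets n k"
proof -
  have "inj_on \<sigma> u" "\<sigma> ` u \<subseteq> {1..n}"
    using assms by (auto simp: ksubsets_def bij_betw_def inj_on_subset)
  then show ?thesis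
    using assms(2) by (simp add: ksubsets_def card_image)
qed

lemma bij_betw_image_ksubsets:
  assumes "bij_betw \<sigma> {1..n} {1..n}"
  shows "bij_betw (image \<sigma>) (ksubsets n k) (ksubsets n k)"
proof -
  have "inj_on (image \<sigma>) (ksubsets n k)"
    using inj_on_image_Pow[OF bij_betw_imp_inj_on[OF assms]]
    by (rule inj_on_subset) (auto simp: ksubsets_def)
  moreover have "image \<sigma> ` ksubsets n k \<subseteq> ksubsets n k"
    using image_mem_ksubsets[OF assms] by blast
  ultimately show ?thesis
    by (simp add: bij_betw_def endo_inj_surj finite_ksubsets)
qed

lemma union_adj_image:
  assumes "bij_betw \<sigma> {1..n} {1..n}" "u \<in> ksubsets n k" "v \<in> ksubsets n k"
  shows "union_adj n k S (\<sigma> ` u) (\<sigma> ` v) = union_adj n k S u v"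
proof -
  have inj: "inj_on \<sigma> {1..n}" and sub: "u \<subseteq> {1..n}" "v \<subseteq> {1..n}"
    using assms by (auto simp: ksubsets_def bij_betw_def)
  then have "card (\<sigma> ` u \<inter> \<sigma> ` v) = card (u \<inter> v)"
    by (metis card_image inj_on_image_Int inj_on_subset le_infI1)
  then show ?thesis
    using assms by (simp add: union_adj_def image_mem_ksubsets)
qed

lemma transition_union_adj_image:
  assumes "bij_betw \<sigma> {1..n} {1..n}" "u \<in> ksubsets n k" "v \<in> ksubsets n k"
  shows "transition (ksubsets n k) (union_adj n k S) t (\<sigma> ` u) (\<sigma> ` v)
       = transition (ksubsets n k) (union_adj n k S) t u v"
  using assms
  by (intro transition_automorphism[where f = "image \<sigma>"] bij_betw_image_ksubsets union_adj_image)

lemma ex_permutation_image_eq: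
  assumes "finite N" "A \<subseteq> N" "B \<subseteq> N" "card A = card B"
  obtains \<sigma> where "bij_betw \<sigma> N N" "\<sigma> ` A = B"
proof -
  have fin: "finite A" "finite B"
    using assms(1-3) finite_subset by auto
  obtain g where g: "bij_betw g A B"
    using finite_same_card_bij[OF fin assms(4)] by blast
  have "card (N - A) = card (N - B)"
    using assms fin by (simp add: card_Diff_subset)
  then obtain h where h: "bij_betw h (N - A) (N - B)"
    using finite_same_card_bij[of "N - A" "N - B"] assms(1) by blast
  define \<sigma> where "\<sigma> z = (if z \<in> A then g z else h z)" for z
  have \<sigma>A: "bij_betw \<sigma> A B"
    using g by (rule bij_betw_cong[THEN iffD1, rotated]) (simp add: \<sigma>_def)
  moreover have "bij_betw \<sigma> (N - A) (N - B)"
    using h by (rule bij_betw_cong[THEN iffD1, rotated]) (simp add: \<sigma>_def)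
  ultimately have "bij_betw \<sigma> (A \<union> (N - A)) (B \<union> (N - B))"
    by (rule bij_betw_combine) blast
  then have "bij_betw \<sigma> N N"
    using assms(2,3) by (simp add: Un_absorb1 Un_Diff_cancel)
  then show thesis
    using \<sigma>A by (intro that) (auto simp: bij_betw_def)
qed

lemma pst_vertices_complementary:
  assumes "u \<in> ksubsets n k" "v \<in> ksubsets n k" "u \<noteq> v"
    and pst: "cmod (transition (ksubsets n k) (union_adj n k S) t u v) = 1"
  shows "u = {1..n} - v"
proof -
  let ?N = "{1..n}"
  let ?H = "transition (ksubsets n k) (union_adj n k S) t"
  have same_side: "x \<in> u \<longleftrightarrow> y \<in> u" if "x \<in> ?N" "y \<in> ?N" "x \<in> v \<longleftrightarrow> y \<in> v" for x y
  proof -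
    let ?\<tau> = "Transposition.transpose x y"
    have \<tau>: "bij_betw ?\<tau> ?N ?N"
      using that(1,2) by simp
    then have "?H (?\<tau> ` u) v = ?H u v"
      using transition_union_adj_image[OF \<tau> assms(1,2)] that(3) by simp
    moreover have "?H (?\<tau> ` u) v = 0" if "?\<tau> ` u \<noteq> u"
      by (rule transition_column_unique[OF finite_ksubsets _ _ assms(2,1) pst
            image_mem_ksubsets[OF \<tau> assms(1)] that])
        (simp_all add: union_adj_symmetric cnj_union_adj)
    ultimately have "?\<tau> ` u = u"
      using pst by force
    then show ?thesis
      by (metis Transposition.transpose_apply_first Transposition.transpose_apply_second imageI)
  qed
  have sub: "u \<subseteq> ?N" "v \<subseteq> ?N" and card: "card u = card v"
    using assms(1,2) by (auto simp: ksubsets_def)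
  have "\<not> v \<subseteq> u" "\<not> u \<subseteq> v"
    using assms(3) sub card card_subset_eq[of u v] card_subset_eq[of v u]
    by (auto intro: finite_subset)
  then obtain a b where a: "a \<in> v - u" and b: "b \<in> u - v"
    by blast
  have "u \<inter> v = {}"
    using same_side[of a] a sub by blast
  moreover have "?N - v \<subseteq> u"
    using same_side[of b] b sub by blast
  ultimately show ?thesis
    using sub by blast
qed

lemma pst_forces_half_size:
  assumes "u \<in> ksubsets n k" "v \<in> ksubsets n k" "u \<noteq> v"
    and "cmod (transition (ksubsets n k) (union_adj n k S) t u v) = 1"
  shows "n = 2 * k"
proof -
  have "u = {1..n} - v"
    by (rule pst_vertices_complementary[OF assms])
  then have "{1..n} - v \<in> ksubsets n k" "{1..n} - v \<in> ksubsets n (n - k)"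
    using assms(1,2) complement_mem_ksubsets by auto
  moreover have "k \<le> n"
    using assms(2) card_mono[of "{1..n}" v] by (auto simp: ksubsets_def)
  ultimately show ?thesis
    by (auto simp: ksubsets_def)
qed

lemma transition_complement_invariant:
  assumes "n = 2 * k" "u \<in> ksubsets n k" "v \<in> ksubsets n k"
  shows "transition (ksubsets n k) (union_adj n k S) t ({1..n} - u) u
       = transition (ksubsets n k) (union_adj n k S) t ({1..n} - v) v"
proof -
  have sub: "u \<subseteq> {1..n}" "v \<subseteq> {1..n}" and "card u = card v"
    using assms(2,3) by (auto simp: ksubsets_def)
  then obtain \<sigma> where \<sigma>: "bij_betw \<sigma> {1..n} {1..n}" "\<sigma> ` u = v"
    by (rule ex_permutation_image_eq[OF finite_atLeastAtMost])
  then have "\<sigma> ` ({1..n} - u) = {1..n} - v"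
    using sub inj_on_image_set_diff[of \<sigma> "{1..n}" "{1..n}" u] by (auto simp: bij_betw_def)
  moreover have "{1..n} - u \<in> ksubsets n k"
    using complement_mem_ksubsets[OF assms(2)] assms(1) by simp
  ultimately show ?thesis
    using transition_union_adj_image[OF \<sigma>(1) _ assms(2)] \<sigma>(2) by metis
qed

lemma transition_eq_complement_map:
  assumes "n = 2 * k" "v0 \<in> ksubsets n k"
    and pst: "cmod (transition (ksubsets n k) (union_adj n k S) t ({1..n} - v0) v0) = 1"
    and "u \<in> ksubsets n k" "v \<in> ksubsets n k"
  shows "transition (ksubsets n k) (union_adj n k S) t u v
       = (if u = {1..n} - v
          then transition (ksubsets n k) (union_adj n k S) t ({1..n} - v0) v0 else 0)"
proof -
  let ?H = "transition (ksubsets n k) (union_adj n k S) t"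
  have partner: "?H ({1..n} - v) v = ?H ({1..n} - v0) v0"
    by (rule transition_complement_invariant[OF assms(1,5,2)])
  have "?H u v = 0" if "u \<noteq> {1..n} - v"
  proof (rule transition_column_unique[OF finite_ksubsets _ _ assms(5) _ _ assms(4) that])
    show "{1..n} - v \<in> ksubsets n k"
      using complement_mem_ksubsets[OF assms(5)] assms(1) by simp
    show "cmod (?H ({1..n} - v) v) = 1"
      using partner pst by simp
  qed (simp_all add: union_adj_symmetric cnj_union_adj)
  then show ?thesis
    using partner by simp
qed

lemma perm_matrix_involution:
  assumes "\<And>u. u \<in> V \<Longrightarrow> \<sigma> u \<in> V" "\<And>u. u \<in> V \<Longrightarrow> \<sigma> (\<sigma> u) = u"
  shows "perm_matrix V (\<lambda>u v. if \<sigma> u = v then 1 else 0)"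
  unfolding perm_matrix_def
  by (intro exI[of _ \<sigma>] conjI bij_betw_byWitness[where f' = \<sigma>]) (use assms in auto)

lemma mat_mult_involution_matrix:
  assumes "finite V" "\<And>u. u \<in> V \<Longrightarrow> \<sigma> u \<in> V" "\<And>u. u \<in> V \<Longrightarrow> \<sigma> (\<sigma> u) = u"
    "u \<in> V" "v \<in> V"
  shows "mat_mult V (\<lambda>u v. if \<sigma> u = v then 1 else 0) (\<lambda>u v. if \<sigma> u = v then 1 else 0) u v
       = mat_id u v"
proof -
  have "mat_mult V (\<lambda>u v. if \<sigma> u = v then 1 else 0) (\<lambda>u v. if \<sigma> u = v then 1 else 0) u v
      = (\<Sum>w\<in>V. if \<sigma> u = w then (if \<sigma> w = v then 1 else 0) else 0)"
    unfolding mat_mult_def by (rule sum.cong) auto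
  also have "\<dots> = (if \<sigma> (\<sigma> u) = v then 1 else 0)"
    using assms(1,2,4) by simp
  finally show ?thesis
    using assms(3-5) by (auto simp: mat_id_def)
qed

theorem mainTheorem19:
  fixes n k :: nat and S :: "nat set" and \<tau> :: real
  assumes "n \<ge> 2 * k" and "2 * k \<ge> 2"
    and "S \<subseteq> {0..<k}" and "card S > 1"
    and "has_pst (ksubsets n k) (union_adj n k S) \<tau>"
  shows "n = 2 * k \<and>
    (\<exists>T (c::complex). perm_matrix (ksubsets n k) T
       \<and> (\<forall>u\<in>ksubsets n k. \<forall>v\<in>ksubsets n k.
             mat_mult (ksubsets n k) T T u v = mat_id u v)
       \<and> (\<exists>u\<in>ksubsets n k. \<exists>v\<in>ksubsets n k. T u v \<noteq> mat_id u v)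
       \<and> (\<forall>u\<in>ksubsets n k. T u u = 0)
       \<and> cmod c = 1
       \<and> (\<forall>u\<in>ksubsets n k. \<forall>v\<in>ksubsets n k.
             transition (ksubsets n k) (union_adj n k S) \<tau> u v = c * T u v))"
proof -
  let ?V = "ksubsets n k"
  let ?H = "transition ?V (union_adj n k S) \<tau>"
  let ?compl = "\<lambda>w. {1..n} - w"
  obtain u v where uv: "u \<in> ?V" "v \<in> ?V" "u \<noteq> v" and pst: "cmod (?H u v) = 1"
    using assms(5) unfolding has_pst_def by blast
  have u: "u = ?compl v"
    by (rule pst_vertices_complementary[OF uv pst])
  have n: "n = 2 * k"
    by (rule pst_forces_half_size[OF uv pst])
  have compl: "?compl w \<in> ?V" "?compl (?compl w) = w" "?compl w \<noteq> w" if "w \<in> ?V" for w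
    using complement_ksubsets_half[OF n _ that] assms(2) by simp_all
  define T where "T = (\<lambda>w x. if ?compl w = x then 1 else 0 :: complex)"
  have "perm_matrix ?V T"
    unfolding T_def by (rule perm_matrix_involution) (use compl in auto)
  moreover have "\<forall>w\<in>?V. \<forall>x\<in>?V. mat_mult ?V T T w x = mat_id w x"
    unfolding T_def using mat_mult_involution_matrix[OF finite_ksubsets compl(1,2)] by blast
  moreover have "T v v \<noteq> mat_id v v" and "\<forall>w\<in>?V. T w w = 0"
    using compl(3) uv(2) by (simp_all add: T_def mat_id_def)
  moreover have "\<forall>w\<in>?V. \<forall>x\<in>?V. ?H w x = ?H u v * T w x"
    using transition_eq_complement_map[OF n uv(2) pst[unfolded u]] compl
    by (auto simp: T_def u)
  ultimately show ?thesis
    using n pst uv(2) by blast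
qed

end
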